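(* Let $F$ be a Banach lattice, $E$ a Banach space and $T\in\mathcal{L}(F,E)$. (i) If $T$ is DNS, then $T$ is weakly DNS. (ii) If $T$ is strongly DNS, then $T$ is strictly DNS.
   Context: $\mathrm{S}_F$ is the unit sphere; $x,y$ disjoint means $|x|\wedge|y|=0$. $T$ is DNS if there is no disjoint $(f_n)\subset\mathrm{S}_F$ with $\|Tf_n\|\to0$; strictly DNS if there is $\delta>0$ such that no disjoint $(f_n)\subset\mathrm{S}_F$ satisfies $\|Tf_n\|\le\delta$ for all $n$. The un-topology on $F$ has zero neighborhood base $\{f:\||f|\wedge h\|<\varepsilon\}$, $h\in F_+$, $\varepsilon>0$; the una-topology is defined the same way with $h$ in the positive part of the ideal $F^a$ of order continuous elements of $F$. $T$ is weakly (resp. strongly) DNS if there is no net $(f_i)\subset\mathrm{S}_F$ that is un-null (resp. una-null) and satisfies $\|Tf_i\|\to0$. *)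

theory Defs
  imports "HOL-Analysis.Analysis"
begin

definition babs :: "'a::{uminus,sup} \<Rightarrow> 'a" where
  "babs x = sup x (- x)"

class banach_lattice = banach + ordered_real_vector + lattice +
  assumes lattice_norm: "sup x (- x) \<le> sup y (- y) \<Longrightarrow> norm x \<le> norm y"

definition bdisjoint :: "'a::banach_lattice \<Rightarrow> 'a \<Rightarrow> bool" where
  "bdisjoint x y \<longleftrightarrow> inf (babs x) (babs y) = 0"

text \<open>Order continuous elements: x is order continuous iff every decreasing net
  in [0,|x|] with infimum 0 is norm null.  The range of a decreasing net is a
  downward directed set, so we phrase it with downward directed sets D.\<close>
definition order_continuous_elem :: "'a::banach_lattice \<Rightarrow> bool" where
  "order_continuous_elem x \<longleftrightarrow>
     (\<forall>D. D \<noteq> {} \<and> D \<subseteq> {0..babs x}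
        \<and> (\<forall>a\<in>D. \<forall>b\<in>D. \<exists>c\<in>D. c \<le> a \<and> c \<le> b)
        \<and> (\<forall>l. (\<forall>d\<in>D. l \<le> d) \<longrightarrow> l \<le> 0)
        \<longrightarrow> (\<forall>\<epsilon>>0. \<exists>d\<in>D. norm d < \<epsilon>))"

text \<open>Nets are represented by a function together with a proper filter on the
  index type (a directed index set gives the filter at_top).\<close>

definition un_null :: "('i \<Rightarrow> 'a::banach_lattice) \<Rightarrow> 'i filter \<Rightarrow> bool" where
  "un_null f D \<longleftrightarrow>
     (\<forall>h. 0 \<le> h \<longrightarrow> ((\<lambda>i. norm (inf (babs (f i)) h)) \<longlongrightarrow> 0) D)"

definition una_null :: "('i \<Rightarrow> 'a::banach_lattice) \<Rightarrow> 'i filter \<Rightarrow> bool" where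
  "una_null f D \<longleftrightarrow>
     (\<forall>h. 0 \<le> h \<and> order_continuous_elem h \<longrightarrow>
          ((\<lambda>i. norm (inf (babs (f i)) h)) \<longlongrightarrow> 0) D)"

definition DNS :: "('a::banach_lattice \<Rightarrow> 'b::real_normed_vector) \<Rightarrow> bool" where
  "DNS T \<longleftrightarrow> \<not> (\<exists>f::nat \<Rightarrow> 'a. (\<forall>n. norm (f n) = 1)
        \<and> (\<forall>m n. m \<noteq> n \<longrightarrow> bdisjoint (f m) (f n))
        \<and> (\<lambda>n. norm (T (f n))) \<longlonglongrightarrow> 0)"

definition strictly_DNS :: "('a::banach_lattice \<Rightarrow> 'b::real_normed_vector) \<Rightarrow> bool" where
  "strictly_DNS T \<longleftrightarrow> (\<exists>\<delta>>0. \<not> (\<exists>f::nat \<Rightarrow> 'a. (\<forall>n. norm (f n) = 1)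
        \<and> (\<forall>m n. m \<noteq> n \<longrightarrow> bdisjoint (f m) (f n))
        \<and> (\<forall>n. norm (T (f n)) \<le> \<delta>)))"

text \<open>For the net notions, the index type is taken to be the type of F itself:
  any net (f_i) along a proper filter induces the image filter on F, so this
  loses no generality.\<close>
definition weakly_DNS :: "('a::banach_lattice \<Rightarrow> 'b::real_normed_vector) \<Rightarrow> bool" where
  "weakly_DNS T \<longleftrightarrow> \<not> (\<exists>(f::'a \<Rightarrow> 'a) (D::'a filter). D \<noteq> bot
        \<and> (\<forall>i. norm (f i) = 1) \<and> un_null f D
        \<and> ((\<lambda>i. norm (T (f i))) \<longlongrightarrow> 0) D)"

definition strongly_DNS :: "('a::banach_lattice \<Rightarrow> 'b::real_normed_vector) \<Rightarrow> bool" where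
  "strongly_DNS T \<longleftrightarrow> \<not> (\<exists>(f::'a \<Rightarrow> 'a) (D::'a filter). D \<noteq> bot
        \<and> (\<forall>i. norm (f i) = 1) \<and> una_null f D
        \<and> ((\<lambda>i. norm (T (f i))) \<longlongrightarrow> 0) D)"

end

theory Submission
  imports Defs "HOL-Library.Lattice_Algebras"
begin

(*
  (i) Let (f_i) be an un-null net of unit vectors with T f_i \<rightarrow> 0. Along the net we pick
  y_k = f_(i_k) with norm (T y_k) < 2^-k and norm (|y_k| \<sqinter> 4^k (|y_0| + ... + |y_(k-1)|)) < 2^-k.
  Shaving off from y_k everything below s_k = 4^k \<Sum>_(j<k) |y_j| + \<Sum>_(j>k) 2^-j |y_j| leaves
  elements d_k that are pairwise disjoint (for i < j, s_i dominates 2^-j |y_j| and s_j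
  dominates 2^j |y_i|) and satisfy norm (y_k - d_k) \<le> 4 * 2^-k; normalising the d_k
  contradicts DNS.

  (ii) If T is not strictly DNS, then for every m there is a disjoint sequence (G_m n)_n of
  unit vectors with norm (T (G_m n)) \<le> 1/(m+1). A disjoint sequence is una-null: for an
  order continuous h \<ge> 0 the partial sums of (|g_n| \<sqinter> h)_n increase inside [0, h] and hence
  converge. The null rows cannot be diagonalised uniformly in h, so we index a single net by
  the limit superior of the filters of the rows; along it the net is una-null and T tends
  to 0, contradicting strong DNS.
*)

subclass (in banach_lattice) lattice_ab_group_add ..

section \<open>Elementary facts on Banach lattices\<close>

lemma babs_nonneg: "0 \<le> babs (x::'a::banach_lattice)"
proof -
  have "0 \<le> sup x (- x) + sup x (- x)"
    by (metis add.right_inverse add_mono sup_ge1 sup_ge2)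
  thus ?thesis unfolding babs_def by simp
qed

lemma babs_eq_self: "0 \<le> (x::'a::banach_lattice) \<Longrightarrow> babs x = x"
  unfolding babs_def by (simp add: sup_absorb1 order_trans[of "- x" 0 x])

lemma norm_babs: "norm (babs (x::'a::banach_lattice)) = norm x"
proof -
  have "sup (babs x) (- babs x) = sup x (- x)"
    using babs_eq_self[OF babs_nonneg, of x] by (simp add: babs_def)
  thus ?thesis using lattice_norm[of "babs x" x] lattice_norm[of x "babs x"] by simp
qed

lemma norm_mono_nonneg: "0 \<le> (x::'a::banach_lattice) \<Longrightarrow> x \<le> y \<Longrightarrow> norm x \<le> norm y"
  using lattice_norm[of x y] babs_eq_self[of x] babs_eq_self[of y] unfolding babs_def by auto

lemma pprt_le_babs: "pprt x \<le> babs (x::'a::banach_lattice)" "pprt (- x) \<le> babs x"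
  using babs_nonneg[of x] unfolding babs_def pprt_def by auto

lemma pprt_diff_pprt_uminus: "pprt x - pprt (- x) = (x::'a::banach_lattice)"
proof -
  have "pprt x - pprt (- x) = pprt x + nprt x" by (simp add: pprt_neg)
  thus ?thesis by (simp flip: prts)
qed

lemma inf_pprt_pprt_uminus: "inf (pprt x) (pprt (- x)) = (0::'a::banach_lattice)"
proof -
  have "pprt (- x) = pprt x - x"
    using pprt_diff_pprt_uminus[of x] by (simp add: algebra_simps)
  hence "inf (pprt x) (pprt (- x)) = pprt x + inf 0 (- x)"
    by (simp add: add_inf_distrib_left)
  also have "inf 0 (- x) = - pprt x"
    by (simp add: pprt_def neg_sup_eq_inf inf_commute)
  finally show ?thesis by simp
qed

lemma diff_pprt_diff: "a - pprt (a - s) = inf s (a::'a::banach_lattice)"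
proof -
  have "a - pprt (a - s) = a + inf (s - a) 0"
    unfolding pprt_def by (simp add: diff_sup_eq_inf)
  also have "\<dots> = inf s a" by (simp add: add_inf_distrib_left)
  finally show ?thesis .
qed

lemma babs_diff_le: "0 \<le> p \<Longrightarrow> 0 \<le> q \<Longrightarrow> babs (p - q) \<le> p + (q::'a::banach_lattice)"
proof -
  assume p: "0 \<le> p" and q: "0 \<le> q"
  have "p - q \<le> p + q" "q - p \<le> q + p"
    using add_left_mono[of "- q" q p] add_left_mono[of "- p" p q] p q
    by (simp_all add: minus_le_self_iff)
  thus ?thesis unfolding babs_def by (simp add: add.commute)
qed

lemma scaleR_sup_pos:
  fixes x y :: "'a::banach_lattice"
  assumes c: "0 < c"
  shows "c *\<^sub>R sup x y = sup (c *\<^sub>R x) (c *\<^sub>R y)"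
proof (rule antisym)
  show "sup (c *\<^sub>R x) (c *\<^sub>R y) \<le> c *\<^sub>R sup x y"
    using c by (intro sup_least scaleR_left_mono) auto
  have "sup x y \<le> (1 / c) *\<^sub>R sup (c *\<^sub>R x) (c *\<^sub>R y)"
  proof (rule sup_least)
    have "x = (1 / c) *\<^sub>R (c *\<^sub>R x)" using c by simp
    also have "\<dots> \<le> (1 / c) *\<^sub>R sup (c *\<^sub>R x) (c *\<^sub>R y)"
      using c by (intro scaleR_left_mono) auto
    finally show "x \<le> (1 / c) *\<^sub>R sup (c *\<^sub>R x) (c *\<^sub>R y)" .
    have "y = (1 / c) *\<^sub>R (c *\<^sub>R y)" using c by simp
    also have "\<dots> \<le> (1 / c) *\<^sub>R sup (c *\<^sub>R x) (c *\<^sub>R y)"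
      using c by (intro scaleR_left_mono) auto
    finally show "y \<le> (1 / c) *\<^sub>R sup (c *\<^sub>R x) (c *\<^sub>R y)" .
  qed
  hence "c *\<^sub>R sup x y \<le> c *\<^sub>R ((1 / c) *\<^sub>R sup (c *\<^sub>R x) (c *\<^sub>R y))"
    using c by (intro scaleR_left_mono) auto
  thus "c *\<^sub>R sup x y \<le> sup (c *\<^sub>R x) (c *\<^sub>R y)" using c by simp
qed

lemma scaleR_inf_pos:
  fixes x y :: "'a::banach_lattice"
  assumes "0 < c"
  shows "c *\<^sub>R inf x y = inf (c *\<^sub>R x) (c *\<^sub>R y)"
proof -
  have "c *\<^sub>R inf x y = - (c *\<^sub>R sup (- x) (- y))"
    by (simp only: inf_eq_neg_sup scaleR_minus_right)
  also have "\<dots> = inf (c *\<^sub>R x) (c *\<^sub>R y)"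
    by (simp only: scaleR_sup_pos[OF assms] scaleR_minus_right inf_eq_neg_sup[of "c *\<^sub>R x"])
  finally show ?thesis .
qed

lemma babs_scaleR_pos: "0 < c \<Longrightarrow> babs (c *\<^sub>R x) = c *\<^sub>R babs (x::'a::banach_lattice)"
  unfolding babs_def by (simp add: scaleR_sup_pos)

lemma pprt_scaleR_pos: "0 < c \<Longrightarrow> pprt (c *\<^sub>R x) = c *\<^sub>R pprt (x::'a::banach_lattice)"
  unfolding pprt_def by (simp add: scaleR_sup_pos)

lemma inf_add_nonneg_le: "0 \<le> c \<Longrightarrow> inf a (b + c) \<le> inf a b + (c::'a::banach_lattice)"
proof -
  assume "0 \<le> c"
  hence "inf a (b + c) \<le> inf (a + c) (b + c)"
    by (meson add_increasing2 inf_mono order_refl)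
  thus ?thesis by (simp add: add_inf_distrib_right)
qed

lemma inf_add_le_add_inf:
  fixes y a b :: "'a::banach_lattice"
  assumes "0 \<le> y" "0 \<le> a" "0 \<le> b"
  shows "inf y (a + b) \<le> inf y a + inf y b"
proof -
  have "inf y a + inf y b = inf (inf (y + y) (y + b)) (inf (a + y) (a + b))"
    by (simp add: add_inf_distrib_left add_inf_distrib_right inf_assoc inf_left_commute)
  moreover have "inf y (a + b) \<le> inf (inf (y + y) (y + b)) (inf (a + y) (a + b))"
    using assms by (auto intro: le_infI1 add_increasing add_increasing2)
  ultimately show ?thesis by simp
qed

lemma inf_eq_0_if_le_scaleR:
  fixes x y a b :: "'a::banach_lattice"
  assumes "0 \<le> x" "0 \<le> y" "0 < c" "x \<le> c *\<^sub>R a" "y \<le> c *\<^sub>R b" "inf a b = 0"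
  shows "inf x y = 0"
proof (rule antisym)
  have "inf x y \<le> inf (c *\<^sub>R a) (c *\<^sub>R b)" using assms(4,5) by (rule inf_mono)
  also have "\<dots> = 0" using assms(3,6) by (simp flip: scaleR_inf_pos)
  finally show "inf x y \<le> 0" .
  show "0 \<le> inf x y" using assms(1,2) by simp
qed

lemma bdisjoint_scaleR_pos:
  fixes x y :: "'a::banach_lattice"
  assumes "0 < c" "0 < c'" "bdisjoint x y"
  shows "bdisjoint (c *\<^sub>R x) (c' *\<^sub>R y)"
  unfolding bdisjoint_def babs_scaleR_pos[OF assms(1)] babs_scaleR_pos[OF assms(2)]
proof (rule inf_eq_0_if_le_scaleR)
  show "0 < max c c'" using assms by simp
  show "c *\<^sub>R babs x \<le> max c c' *\<^sub>R babs x" "c' *\<^sub>R babs y \<le> max c c' *\<^sub>R babs y"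
    by (intro scaleR_right_mono babs_nonneg max.cobounded1 max.cobounded2)+
  show "inf (babs x) (babs y) = 0" using assms(3) unfolding bdisjoint_def .
qed (intro scaleR_nonneg_nonneg babs_nonneg less_imp_le assms)+

lemma nonneg_limit:
  fixes X :: "nat \<Rightarrow> 'a::banach_lattice"
  assumes lim: "X \<longlonglongrightarrow> x" and nonneg: "\<And>n. 0 \<le> X n"
  shows "0 \<le> x"
proof -
  have "norm (pprt (- x)) \<le> norm (X n - x)" for n
  proof -
    have "- x \<le> X n - x" using nonneg[of n] by simp
    also have "\<dots> \<le> babs (X n - x)" unfolding babs_def by (rule sup_ge1)
    finally have "pprt (- x) \<le> babs (X n - x)"
      unfolding pprt_def using babs_nonneg by (rule sup_least)
    from norm_mono_nonneg[OF zero_le_pprt this] show ?thesis by (simp only: norm_babs)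
  qed
  moreover have "(\<lambda>n. norm (X n - x)) \<longlonglongrightarrow> 0"
    using lim by (simp add: LIM_zero tendsto_norm_zero)
  ultimately have "norm (pprt (- x)) \<le> 0" by (intro LIMSEQ_le_const) auto
  hence "sup (- x) 0 = 0" unfolding pprt_def by simp
  hence "- x \<le> 0" using sup_ge1[of "- x" 0] by (simp only:)
  thus ?thesis by (simp only: neg_le_0_iff_le)
qed

lemma nonneg_suminf:
  fixes g :: "nat \<Rightarrow> 'a::banach_lattice"
  assumes "summable g" "\<And>n. 0 \<le> g n"
  shows "0 \<le> suminf g"
  using assms by (intro nonneg_limit[OF summable_LIMSEQ] sum_nonneg)

lemma le_suminf_term:
  fixes g :: "nat \<Rightarrow> 'a::banach_lattice"
  assumes s: "summable g" and nonneg: "\<And>n. 0 \<le> g n"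
  shows "g k \<le> suminf g"
proof -
  define h where "h n = (if n = k then g n else 0)" for n
  have h: "h sums g k" unfolding h_def by (rule sums_single)
  have "0 \<le> (\<Sum>n. g n - h n)"
    using s h nonneg by (intro nonneg_suminf summable_diff) (auto simp: sums_summable h_def)
  also have "\<dots> = suminf g - g k"
    using suminf_diff[OF s sums_summable[OF h]] sums_unique[OF h] by simp
  finally show ?thesis by simp
qed

lemma nonneg_eq_0_if_multiples_le:
  fixes l h :: "'a::banach_lattice"
  assumes "0 \<le> l" and "\<And>k::nat. of_nat k *\<^sub>R l \<le> h"
  shows "l = 0"
proof (rule ccontr)
  assume "l \<noteq> 0"
  then obtain k :: nat where "norm h < real k * norm l"
    using reals_Archimedean3[of "norm l"] by auto
  moreover have "norm (of_nat k *\<^sub>R l) \<le> norm h"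
    using assms by (intro norm_mono_nonneg scaleR_nonneg_nonneg) auto
  ultimately show False by simp
qed

section \<open>Almost disjoint sequences\<close>

lemma un_null_select:
  fixes f :: "'i \<Rightarrow> 'a::banach_lattice" and T :: "'a \<Rightarrow> 'b::real_normed_vector"
  assumes "D \<noteq> bot" "un_null f D" "((\<lambda>i. norm (T (f i))) \<longlongrightarrow> 0) D" "0 \<le> u" "0 < \<epsilon>"
  shows "\<exists>i. norm (T (f i)) < \<epsilon> \<and> norm (inf (babs (f i)) u) < \<epsilon>"
proof -
  have "eventually (\<lambda>i. norm (T (f i)) < \<epsilon>) D"
    using tendstoD[OF assms(3,5)] by simp
  moreover have "eventually (\<lambda>i. norm (inf (babs (f i)) u) < \<epsilon>) D"
    using tendstoD[OF assms(2)[unfolded un_null_def, rule_format, OF assms(4)] assms(5)] by simp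
  ultimately show ?thesis using eventually_happens'[OF assms(1) eventually_conj] by blast
qed

lemma exists_sequence_partial_sums:
  fixes Q :: "'a::banach_lattice \<Rightarrow> nat \<Rightarrow> 'a \<Rightarrow> bool"
  assumes "\<And>u k. 0 \<le> u \<Longrightarrow> \<exists>y. Q u k y"
  shows "\<exists>y. \<forall>k. Q (\<Sum>j<k. babs (y j)) k (y k)"
proof -
  define pick where "pick u k = (SOME y. Q u k y)" for u k
  define U where "U = rec_nat 0 (\<lambda>k u. u + babs (pick u k))"
  define y where "y k = pick (U k) k" for k
  have U_eq: "U k = (\<Sum>j<k. babs (y j))" for k
    by (induction k) (simp_all add: U_def y_def)
  have "Q (U k) k (y k)" for k
    unfolding y_def pick_def using U_eq[of k]
    by (intro someI_ex[OF assms]) (simp add: sum_nonneg babs_nonneg)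
  thus ?thesis unfolding U_eq by blast
qed

definition shave :: "'a::banach_lattice \<Rightarrow> 'a \<Rightarrow> 'a" where
  "shave s x = pprt (pprt x - s) - pprt (pprt (- x) - s)"

lemma babs_shave_le: "babs (shave s x) \<le> 2 *\<^sub>R pprt (babs x - s)"
proof -
  have "babs (shave s x) \<le> pprt (pprt x - s) + pprt (pprt (- x) - s)"
    unfolding shave_def by (intro babs_diff_le zero_le_pprt)
  also have "\<dots> \<le> pprt (babs x - s) + pprt (babs x - s)"
    by (intro add_mono pprt_mono diff_right_mono pprt_le_babs)
  finally show ?thesis by (simp add: scaleR_2)
qed

lemma norm_diff_shave_le:
  assumes "0 \<le> s"
  shows "norm (x - shave s x) \<le> 2 * norm (inf (babs x) s)"
proof -
  have "x - shave s x = inf s (pprt x) - inf s (pprt (- x))"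
    unfolding shave_def diff_pprt_diff[symmetric]
    by (subst (1) pprt_diff_pprt_uminus[symmetric, of x]) (simp add: algebra_simps)
  hence "norm (x - shave s x) \<le> norm (inf s (pprt x)) + norm (inf s (pprt (- x)))"
    by (simp only: norm_triangle_ineq4)
  also have "\<dots> \<le> norm (inf (babs x) s) + norm (inf (babs x) s)"
    using assms pprt_le_babs[of x]
    by (intro add_mono norm_mono_nonneg) (auto simp: le_infI1 le_infI2)
  finally show ?thesis by simp
qed

lemma inf_pprt_diff_eq_0:
  fixes a b s t :: "'a::banach_lattice"
  assumes c: "0 < c" and "(1 / c) *\<^sub>R b \<le> s" and "c *\<^sub>R a \<le> t"
  shows "inf (pprt (a - s)) (pprt (b - t)) = 0"
proof (rule inf_eq_0_if_le_scaleR)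
  let ?z = "a - (1 / c) *\<^sub>R b"
  have "pprt (a - s) \<le> pprt ?z" using assms(2) by (intro pprt_mono diff_left_mono)
  also have "\<dots> \<le> max 1 c *\<^sub>R pprt ?z"
    using scaleR_right_mono[of 1 "max 1 c" "pprt ?z"] by simp
  finally show "pprt (a - s) \<le> max 1 c *\<^sub>R pprt ?z" .
  have "pprt (b - t) \<le> pprt (b - c *\<^sub>R a)" using assms(3) by (intro pprt_mono diff_left_mono)
  also have "b - c *\<^sub>R a = c *\<^sub>R (- ?z)" using c by (simp add: algebra_simps)
  also have "pprt (c *\<^sub>R (- ?z)) = c *\<^sub>R pprt (- ?z)" using c by (rule pprt_scaleR_pos)
  also have "\<dots> \<le> max 1 c *\<^sub>R pprt (- ?z)" by (intro scaleR_right_mono) simp_all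
  finally show "pprt (b - t) \<le> max 1 c *\<^sub>R pprt (- ?z)" .
  show "inf (pprt ?z) (pprt (- ?z)) = 0" by (rule inf_pprt_pprt_uminus)
qed (simp_all add: c)

lemma exists_geometric_tail_majorant:
  fixes a :: "nat \<Rightarrow> 'a::banach_lattice"
  assumes nonneg: "\<And>j. 0 \<le> a j" and norm_le: "\<And>j. norm (a j) \<le> 1"
  shows "\<exists>W. 0 \<le> W \<and> norm W \<le> (1/2)^i \<and> (\<forall>j>i. (1/2::real)^j *\<^sub>R a j \<le> W)"
proof -
  define g where "g j = (1/2::real)^(j + Suc i) *\<^sub>R a (j + Suc i)" for j
  have g_nonneg: "0 \<le> g j" for j unfolding g_def by (intro scaleR_nonneg_nonneg nonneg) simp
  have norm_g: "norm (g j) \<le> (1/2)^(j + Suc i)" for j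
    unfolding g_def using norm_le[of "j + Suc i"] by (simp add: mult_left_le)
  have "(\<lambda>j. (1/2::real)^j) sums 2" using geometric_sums[of "1/2::real"] by simp
  hence "(\<lambda>j. (1/2::real)^j * (1/2)^(Suc i)) sums (2 * (1/2)^(Suc i))" by (rule sums_mult2)
  moreover have "(1/2::real)^j * (1/2)^(Suc i) = (1/2)^(j + Suc i)" for j by (simp only: power_add)
  moreover have "2 * (1/2::real)^(Suc i) = (1/2)^i" by simp
  ultimately have geom: "(\<lambda>j. (1/2::real)^(j + Suc i)) sums (1/2)^i" by (simp only:)
  have "summable g" by (rule summable_comparison_test'[OF sums_summable[OF geom] norm_g])
  show ?thesis
  proof (intro exI conjI allI impI)
    show "0 \<le> suminf g" using \<open>summable g\<close> g_nonneg by (rule nonneg_suminf)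
    show "norm (suminf g) \<le> (1/2)^i"
      using norm_suminf_le[OF norm_g sums_summable[OF geom]] sums_unique[OF geom] by simp
    fix j assume "i < j"
    hence "g (j - Suc i) = (1/2::real)^j *\<^sub>R a j" unfolding g_def by simp
    thus "(1/2::real)^j *\<^sub>R a j \<le> suminf g"
      using le_suminf_term[OF \<open>summable g\<close> g_nonneg, of "j - Suc i"] by simp
  qed
qed

lemma exists_disjoint_approximation:
  fixes y :: "nat \<Rightarrow> 'a::banach_lattice"
  assumes norm_y: "\<And>k. norm (y k) \<le> 1"
    and small: "\<And>k. norm (inf (babs (y k)) ((4::real)^k *\<^sub>R (\<Sum>j<k. babs (y j)))) \<le> (1/2)^k"
  shows "\<exists>d. (\<forall>i j. i \<noteq> j \<longrightarrow> bdisjoint (d i) (d j)) \<and> (\<forall>k. norm (y k - d k) \<le> 4 * (1/2)^k)"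
proof -
  define a where "a k = babs (y k)" for k
  define U where "U k = (\<Sum>j<k. a j)" for k
  have a_nonneg: "0 \<le> a k" for k unfolding a_def by (rule babs_nonneg)
  have U_nonneg: "0 \<le> U k" for k unfolding U_def by (simp add: sum_nonneg a_nonneg)
  have "\<exists>W. 0 \<le> W \<and> norm W \<le> (1/2)^i \<and> (\<forall>j>i. (1/2::real)^j *\<^sub>R a j \<le> W)" for i
    using norm_y unfolding a_def by (intro exists_geometric_tail_majorant babs_nonneg) (simp add: norm_babs)
  then obtain W where W_nonneg: "\<And>i. 0 \<le> W i" and norm_W: "\<And>i. norm (W i) \<le> (1/2)^i"
    and W_ge: "\<And>i j. i < j \<Longrightarrow> (1/2::real)^j *\<^sub>R a j \<le> W i"
    by metis
  define s where "s i = (4::real)^i *\<^sub>R U i + W i" for i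
  define d where "d i = shave (s i) (y i)" for i
  have s_nonneg: "0 \<le> s i" for i
    unfolding s_def by (intro add_nonneg_nonneg scaleR_nonneg_nonneg U_nonneg W_nonneg) simp
  have disjoint_less: "bdisjoint (d i) (d j)" if "i < j" for i j
  proof -
    have "(1/2::real)^j *\<^sub>R a j \<le> W i" using \<open>i < j\<close> by (rule W_ge)
    also have "\<dots> \<le> s i"
      unfolding s_def by (intro add_increasing scaleR_nonneg_nonneg U_nonneg order_refl) simp
    finally have tail: "(1 / 2^j) *\<^sub>R a j \<le> s i" by (simp only: power_one_over)
    have "(2::real)^j *\<^sub>R a i \<le> (4::real)^j *\<^sub>R a i"
      by (intro scaleR_right_mono a_nonneg power_mono) simp_all
    also have "\<dots> \<le> (4::real)^j *\<^sub>R U j"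
      unfolding U_def using sum_mono2[of "{..<j}" "{i}" a] \<open>i < j\<close> a_nonneg
      by (intro scaleR_left_mono) auto
    also have "\<dots> \<le> s j" unfolding s_def using W_nonneg[of j] by simp
    finally have head: "(2::real)^j *\<^sub>R a i \<le> s j" .
    have "inf (pprt (a i - s i)) (pprt (a j - s j)) = 0"
      by (rule inf_pprt_diff_eq_0[OF _ tail head]) simp
    from inf_eq_0_if_le_scaleR[OF babs_nonneg babs_nonneg _ babs_shave_le babs_shave_le this[unfolded a_def]]
    show ?thesis unfolding bdisjoint_def d_def by simp
  qed
  have "bdisjoint (d i) (d j)" if "i \<noteq> j" for i j
  proof (cases "i < j")
    case False
    with \<open>i \<noteq> j\<close> have "j < i" by simp
    from disjoint_less[OF this] show ?thesis unfolding bdisjoint_def by (simp add: inf_commute)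
  qed (rule disjoint_less)
  moreover have "norm (y k - d k) \<le> 4 * (1/2)^k" for k
  proof -
    have "inf (a k) (s k) \<le> inf (a k) ((4::real)^k *\<^sub>R U k) + W k"
      unfolding s_def by (rule inf_add_nonneg_le[OF W_nonneg])
    hence "norm (inf (a k) (s k)) \<le> norm (inf (a k) ((4::real)^k *\<^sub>R U k) + W k)"
      by (rule norm_mono_nonneg[rotated]) (simp add: a_nonneg s_nonneg)
    also have "\<dots> \<le> (1/2)^k + (1/2)^k"
      using small[of k] norm_W[of k] norm_triangle_ineq[of "inf (a k) ((4::real)^k *\<^sub>R U k)" "W k"]
      unfolding a_def U_def by linarith
    finally have "norm (inf (a k) (s k)) \<le> 2 * (1/2)^k" by simp
    thus ?thesis
      using norm_diff_shave_le[OF s_nonneg, of "y k" k] unfolding d_def a_def by linarith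
  qed
  ultimately show ?thesis by blast
qed

lemma not_DNS_if_close_to_disjoint:
  fixes T :: "'a::banach_lattice \<Rightarrow> 'b::real_normed_vector"
  assumes T: "bounded_linear T"
    and norm_y: "\<And>k. norm (y k) = 1" and T_y: "(\<lambda>k. norm (T (y k))) \<longlonglongrightarrow> 0"
    and disjoint: "\<And>i j. i \<noteq> j \<Longrightarrow> bdisjoint (d i) (d j)"
    and close: "(\<lambda>k. norm (y k - d k)) \<longlonglongrightarrow> 0"
  shows "\<not> DNS T"
proof -
  have "(\<lambda>k. y k - d k) \<longlonglongrightarrow> 0" using close by (simp only: tendsto_norm_zero_iff)
  hence "(\<lambda>k. T (y k - d k)) \<longlonglongrightarrow> 0" by (rule bounded_linear.tendsto_zero[OF T])
  moreover have "(\<lambda>k. T (y k)) \<longlonglongrightarrow> 0" using T_y by (simp only: tendsto_norm_zero_iff)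
  ultimately have "(\<lambda>k. T (y k) - T (y k - d k)) \<longlonglongrightarrow> 0 - 0" by (intro tendsto_diff)
  hence T_d: "(\<lambda>k. norm (T (d k))) \<longlonglongrightarrow> 0"
    by (simp add: linear_diff[OF bounded_linear.linear[OF T]] tendsto_norm_zero_iff)
  have "norm (norm (d k) - 1) \<le> norm (y k - d k)" for k
    using norm_triangle_ineq3[of "d k" "y k"] by (simp only: norm_y norm_minus_commute real_norm_def)
  hence "(\<lambda>k. norm (d k) - 1) \<longlonglongrightarrow> 0"
    by (intro Lim_null_comparison[OF always_eventually close] allI)
  hence norm_d: "(\<lambda>k. norm (d k)) \<longlonglongrightarrow> 1" by (rule LIM_zero_cancel)
  then obtain N where pos: "\<And>k. N \<le> k \<Longrightarrow> 0 < norm (d k)"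
    using order_tendstoD(1)[OF norm_d zero_less_one] unfolding eventually_sequentially by blast
  define g where "g k = (1 / norm (d (k + N))) *\<^sub>R d (k + N)" for k
  have "norm (g k) = 1" for k unfolding g_def using pos[of "k + N"] by simp
  moreover have "bdisjoint (g m) (g n)" if "m \<noteq> n" for m n
    unfolding g_def using that pos by (intro bdisjoint_scaleR_pos disjoint) simp_all
  moreover have "(\<lambda>k. norm (T (g k))) \<longlonglongrightarrow> 0"
  proof -
    have "(\<lambda>k. norm (T (d k)) / norm (d k)) \<longlonglongrightarrow> 0 / 1"
      using T_d norm_d by (rule tendsto_divide) simp
    hence "(\<lambda>k. norm (T (d (k + N))) / norm (d (k + N))) \<longlonglongrightarrow> 0"
      using LIMSEQ_ignore_initial_segment[of _ 0 N] by simp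
    moreover have "norm (T (g k)) = norm (T (d (k + N))) / norm (d (k + N))" for k
      unfolding g_def using pos[of "k + N"] by (simp add: linear_scale[OF bounded_linear.linear[OF T]])
    ultimately show ?thesis by simp
  qed
  ultimately show ?thesis unfolding DNS_def by blast
qed

lemma DNS_imp_weakly_DNS:
  fixes T :: "'a::banach_lattice \<Rightarrow> 'b::real_normed_vector"
  assumes T: "bounded_linear T" and "DNS T"
  shows "weakly_DNS T"
proof (rule ccontr)
  assume "\<not> weakly_DNS T"
  then obtain f :: "'a \<Rightarrow> 'a" and D where net: "D \<noteq> bot" "un_null f D"
      "((\<lambda>i. norm (T (f i))) \<longlongrightarrow> 0) D" and norm_f: "\<And>i. norm (f i) = 1"
    unfolding weakly_DNS_def by blast
  define Q where "Q u k x \<longleftrightarrow> norm x = 1 \<and> norm (T x) < (1/2)^k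
      \<and> norm (inf (babs x) ((4::real)^k *\<^sub>R u)) < (1/2)^k" for u k x
  have "\<exists>x. Q u k x" if "0 \<le> u" for u k
  proof -
    have "0 \<le> (4::real)^k *\<^sub>R u" using that by (simp add: scaleR_nonneg_nonneg)
    from un_null_select[OF net this, of "(1/2)^k"] norm_f show ?thesis
      unfolding Q_def by auto
  qed
  then obtain y where y: "\<And>k. Q (\<Sum>j<k. babs (y j)) k (y k)"
    using exists_sequence_partial_sums[of Q] by blast
  hence norm_y: "\<And>k. norm (y k) = 1" and T_y: "\<And>k. norm (T (y k)) < (1/2)^k"
    and small: "\<And>k. norm (inf (babs (y k)) ((4::real)^k *\<^sub>R (\<Sum>j<k. babs (y j)))) \<le> (1/2)^k"
    unfolding Q_def by (auto simp: less_imp_le)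
  obtain d where disjoint: "\<And>i j. i \<noteq> j \<Longrightarrow> bdisjoint (d i) (d j)"
      and close: "\<And>k. norm (y k - d k) \<le> 4 * (1/2)^k"
    using exists_disjoint_approximation[OF _ small] norm_y by fastforce
  have geometric: "(\<lambda>k. c * (1/2::real)^k) \<longlonglongrightarrow> 0" for c
    by (intro tendsto_mult_right_zero LIMSEQ_realpow_zero) simp_all
  have T_y_null: "(\<lambda>k. norm (T (y k))) \<longlonglongrightarrow> 0"
    using T_y by (intro Lim_null_comparison[OF _ geometric[of 1]] always_eventually allI) (simp add: less_imp_le)
  have close_null: "(\<lambda>k. norm (y k - d k)) \<longlonglongrightarrow> 0"
    using close by (intro Lim_null_comparison[OF _ geometric[of 4]] always_eventually allI) simp
  from not_DNS_if_close_to_disjoint[OF T norm_y T_y_null disjoint close_null] \<open>DNS T\<close>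
  show False by contradiction
qed

section \<open>Order continuity and disjoint sequences\<close>

lemma lower_bound_of_gaps_nonpos:
  fixes x :: "nat \<Rightarrow> 'a::banach_lattice"
  assumes below: "\<And>n. x n \<le> h"
    and lower: "\<And>u n. u \<le> h \<Longrightarrow> (\<forall>m. x m \<le> u) \<Longrightarrow> l \<le> u - x n"
  shows "l \<le> 0"
proof -
  have step: "x m \<le> u - pprt l" if "u \<le> h" "\<forall>m. x m \<le> u" for u m
  proof -
    have "pprt l \<le> u - x m"
      unfolding pprt_def using lower[OF that, of m] that(2) by simp
    thus ?thesis by (metis add.commute le_diff_eq)
  qed
  have multiples: "\<forall>m. x m \<le> h - of_nat k *\<^sub>R pprt l" for k
  proof (induction k)
    case (Suc k)
    have "h - of_nat k *\<^sub>R pprt l \<le> h" by (simp add: scaleR_nonneg_nonneg)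
    from step[OF this Suc.IH] show ?case by (simp add: algebra_simps)
  qed (simp add: below)
  have "of_nat k *\<^sub>R pprt l \<le> h - x 0" for k
    using multiples[of k] by (simp add: le_diff_eq add.commute)
  hence "pprt l = 0" by (intro nonneg_eq_0_if_multiples_le zero_le_pprt)
  thus ?thesis by (simp add: le_zero_iff_zero_pprt)
qed

lemma order_continuous_incseq_Cauchy:
  fixes x :: "nat \<Rightarrow> 'a::banach_lattice"
  assumes oc: "order_continuous_elem h" and inc: "incseq x"
    and nonneg: "\<And>n. 0 \<le> x n" and below: "\<And>n. x n \<le> h"
  shows "Cauchy x"
proof (rule CauchyI)
  fix \<epsilon> :: real assume "0 < \<epsilon>"
  define U where "U = {u. u \<le> h \<and> (\<forall>n. x n \<le> u)}"
  define D where "D = {u - x n | u n. u \<in> U}"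
  have "h \<in> U" unfolding U_def using below by simp
  have "0 \<le> h" using nonneg[of 0] below[of 0] by (rule order_trans)
  have nonempty: "D \<noteq> {}" using \<open>h \<in> U\<close> unfolding D_def by blast
  have bounded: "D \<subseteq> {0..babs h}"
  proof
    fix d assume "d \<in> D"
    then obtain u n where d: "d = u - x n" "u \<le> h" "x n \<le> u" unfolding D_def U_def by blast
    have "u - x n \<le> u" using nonneg[of n] by simp
    from order_trans[OF this d(2)] have "d \<le> h" unfolding d(1) .
    thus "d \<in> {0..babs h}" using d unfolding babs_eq_self[OF \<open>0 \<le> h\<close>] by simp
  qed
  have directed: "\<forall>a\<in>D. \<forall>b\<in>D. \<exists>c\<in>D. c \<le> a \<and> c \<le> b"
  proof (intro ballI)
    fix a b assume "a \<in> D" "b \<in> D"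
    then obtain u n u' n' where ab: "a = u - x n" "u \<in> U" "b = u' - x n'" "u' \<in> U"
      unfolding D_def by blast
    have "inf u u' \<in> U" using ab unfolding U_def by (auto intro: le_infI1)
    hence "inf u u' - x (max n n') \<in> D" unfolding D_def by blast
    moreover have "inf u u' - x (max n n') \<le> a" "inf u u' - x (max n n') \<le> b"
      unfolding ab(1,3) using incseqD[OF inc, of n "max n n'"] incseqD[OF inc, of n' "max n n'"]
      by (simp_all add: diff_mono)
    ultimately show "\<exists>c\<in>D. c \<le> a \<and> c \<le> b" by blast
  qed
  have Inf_0: "\<forall>l. (\<forall>d\<in>D. l \<le> d) \<longrightarrow> l \<le> 0"
  proof (intro allI impI)
    fix l assume lower: "\<forall>d\<in>D. l \<le> d"
    show "l \<le> 0"
    proof (rule lower_bound_of_gaps_nonpos[OF below])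
      fix u n assume "u \<le> h" "\<forall>m. x m \<le> u"
      hence "u - x n \<in> D" unfolding D_def U_def by blast
      thus "l \<le> u - x n" using lower by blast
    qed
  qed
  have "\<forall>\<delta>>0. \<exists>d\<in>D. norm d < \<delta>"
    by (rule mp[OF spec[OF oc[unfolded order_continuous_elem_def], of D]])
      (intro conjI nonempty bounded directed Inf_0)
  then obtain d where "d \<in> D" "norm d < \<epsilon> / 2" using \<open>0 < \<epsilon>\<close> half_gt_zero by blast
  then obtain u N where d: "d = u - x N" "u \<in> U" unfolding D_def by blast
  have close: "norm (x m - x N) < \<epsilon> / 2" if "N \<le> m" for m
  proof -
    have "x N \<le> x m" using inc \<open>N \<le> m\<close> by (rule incseqD)
    moreover have "x m - x N \<le> d" using d unfolding U_def by (simp add: diff_right_mono)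
    ultimately have "norm (x m - x N) \<le> norm d" by (intro norm_mono_nonneg) simp_all
    thus ?thesis using \<open>norm d < \<epsilon> / 2\<close> by simp
  qed
  show "\<exists>M. \<forall>m\<ge>M. \<forall>n\<ge>M. norm (x m - x n) < \<epsilon>"
  proof (intro exI allI impI)
    fix m n assume "N \<le> m" "N \<le> n"
    have "norm (x m - x n) \<le> norm (x m - x N) + norm (x n - x N)"
      using norm_triangle_ineq4[of "x m - x N" "x n - x N"] by simp
    thus "norm (x m - x n) < \<epsilon>"
      using close[OF \<open>N \<le> m\<close>] close[OF \<open>N \<le> n\<close>] by simp
  qed
qed

lemma order_continuous_disjoint_norm_null:
  fixes y :: "nat \<Rightarrow> 'a::banach_lattice"
  assumes oc: "order_continuous_elem h"
    and nonneg: "\<And>n. 0 \<le> y n" and below: "\<And>n. y n \<le> h"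
    and disjoint: "\<And>m n. m \<noteq> n \<Longrightarrow> inf (y m) (y n) = 0"
  shows "(\<lambda>n. norm (y n)) \<longlonglongrightarrow> 0"
proof -
  define x where "x n = (\<Sum>k<n. y k)" for n
  have x_Suc: "x (Suc n) = x n + y n" for n unfolding x_def by simp
  have x_nonneg: "0 \<le> x n" for n unfolding x_def using nonneg by (simp add: sum_nonneg)
  have inf_x: "inf (y m) (x n) = 0" if "n \<le> m" for m n
    using that
  proof (induction n)
    case (Suc n)
    have "inf (y m) (x n + y n) \<le> inf (y m) (x n) + inf (y m) (y n)"
      using nonneg x_nonneg by (intro inf_add_le_add_inf)
    also have "\<dots> = 0" using Suc disjoint[of m n] by simp
    finally show ?case using nonneg[of m] x_nonneg[of "Suc n"] by (simp add: x_Suc antisym)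
  qed (simp add: x_def inf_absorb2 nonneg)
  have x_below: "x n \<le> h" for n
  proof (induction n)
    case (Suc n)
    have "x (Suc n) = sup (x n) (y n) + inf (x n) (y n)"
      unfolding x_Suc by (rule add_eq_inf_sup)
    also have "inf (x n) (y n) = 0" using inf_x[of n n] by (simp add: inf_commute)
    finally show ?case using Suc below[of n] by simp
  qed (use oc nonneg below in \<open>simp add: x_def order_trans[OF nonneg below]\<close>)
  have "incseq x" unfolding incseq_Suc_iff x_Suc using nonneg by (simp add: add_increasing2)
  from order_continuous_incseq_Cauchy[OF oc this x_nonneg x_below]
  obtain L where "x \<longlonglongrightarrow> L" using Cauchy_convergent unfolding convergent_def by blast
  hence "(\<lambda>n. x (Suc n) - x n) \<longlonglongrightarrow> L - L"
    by (intro tendsto_diff) (simp_all add: LIMSEQ_Suc)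
  thus ?thesis unfolding x_Suc using tendsto_norm_zero by fastforce
qed

lemma disjoint_sequence_una_null:
  fixes g :: "nat \<Rightarrow> 'a::banach_lattice"
  assumes "\<And>m n. m \<noteq> n \<Longrightarrow> bdisjoint (g m) (g n)"
  shows "una_null g sequentially"
  unfolding una_null_def
proof (intro allI impI, elim conjE)
  fix h :: 'a assume "0 \<le> h" "order_continuous_elem h"
  show "(\<lambda>n. norm (inf (babs (g n)) h)) \<longlonglongrightarrow> 0"
  proof (rule order_continuous_disjoint_norm_null[OF \<open>order_continuous_elem h\<close>])
    fix m n :: nat assume "m \<noteq> n"
    have "inf (inf (babs (g m)) h) (inf (babs (g n)) h) \<le> inf (babs (g m)) (babs (g n))"
      by (meson inf_le1 inf_mono)
    also have "\<dots> = 0" using assms[OF \<open>m \<noteq> n\<close>] unfolding bdisjoint_def .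
    finally have "inf (inf (babs (g m)) h) (inf (babs (g n)) h) \<le> 0" .
    thus "inf (inf (babs (g m)) h) (inf (babs (g n)) h) = 0"
      by (rule antisym) (intro le_infI babs_nonneg \<open>0 \<le> h\<close>)
  qed (use \<open>0 \<le> h\<close> babs_nonneg in simp_all)
qed

section \<open>Limit superior of filters\<close>

definition limsup_filter :: "(nat \<Rightarrow> 'a filter) \<Rightarrow> 'a filter" where
  "limsup_filter F = (INF M. SUP m\<in>{M..}. F m)"

lemma eventually_limsup_filter:
  "eventually P (limsup_filter F) \<longleftrightarrow> (\<exists>M. \<forall>m\<ge>M. eventually P (F m))"
proof -
  have "\<exists>c. (SUP m\<in>{c..}. F m) \<le> inf (SUP m\<in>{a..}. F m) (SUP m\<in>{b..}. F m)" for a b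
    by (rule exI[of _ "max a b"]) (auto intro: SUP_subset_mono)
  thus ?thesis
    unfolding limsup_filter_def by (subst eventually_INF_base) (auto simp: eventually_Sup)
qed

lemma limsup_filter_neq_bot: "(\<And>m. F m \<noteq> bot) \<Longrightarrow> limsup_filter F \<noteq> bot"
  unfolding trivial_limit_def eventually_limsup_filter by blast

lemma strongly_DNS_imp_strictly_DNS:
  fixes T :: "'a::banach_lattice \<Rightarrow> 'b::real_normed_vector"
  assumes "strongly_DNS T"
  shows "strictly_DNS T"
proof (rule ccontr)
  assume "\<not> strictly_DNS T"
  hence "\<exists>g::nat \<Rightarrow> 'a. (\<forall>n. norm (g n) = 1) \<and> (\<forall>i j. i \<noteq> j \<longrightarrow> bdisjoint (g i) (g j))
      \<and> (\<forall>n. norm (T (g n)) \<le> 1 / Suc m)" for m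
    unfolding strictly_DNS_def by (meson of_nat_0_less_iff zero_less_Suc divide_pos_pos zero_less_one)
  then obtain G :: "nat \<Rightarrow> nat \<Rightarrow> 'a" where
    norm_G: "\<And>m n. norm (G m n) = 1" and
    disjoint_G: "\<And>m i j. i \<noteq> j \<Longrightarrow> bdisjoint (G m i) (G m j)" and
    T_G: "\<And>m n. norm (T (G m n)) \<le> 1 / Suc m"
    by metis
  define F where "F = limsup_filter (\<lambda>m. filtermap (G m) sequentially)"
  \<comment> \<open>Off the range of \<open>G\<close> the net is irrelevant; it only has to consist of unit vectors.\<close>
  define f where "f x = (if norm x = 1 then x else G 0 0)" for x
  have f_G: "f (G m n) = G m n" for m n using norm_G unfolding f_def by simp
  have eventually_F: "eventually P F" if "\<exists>M. \<forall>m\<ge>M. eventually (\<lambda>n. P (G m n)) sequentially" for P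
    using that unfolding F_def eventually_limsup_filter eventually_filtermap .
  have "F \<noteq> bot" unfolding F_def by (intro limsup_filter_neq_bot) (simp add: filtermap_bot_iff)
  moreover have "norm (f x) = 1" for x using norm_G unfolding f_def by simp
  moreover have "una_null f F"
    unfolding una_null_def
  proof (intro allI impI tendstoI eventually_F exI[of _ 0] allI impI)
    fix h :: 'a and e :: real and m :: nat
    assume "0 \<le> h \<and> order_continuous_elem h" "0 < e"
    moreover have "una_null (G m) sequentially"
      by (rule disjoint_sequence_una_null) (rule disjoint_G)
    ultimately show "\<forall>\<^sub>F n in sequentially. dist (norm (inf (babs (f (G m n))) h)) 0 < e"
      unfolding una_null_def f_G by (blast dest: tendstoD)
  qed
  moreover have "((\<lambda>x. norm (T (f x))) \<longlongrightarrow> 0) F"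
  proof (intro tendstoI eventually_F)
    fix e :: real assume "0 < e"
    then obtain M :: nat where "1 / Suc M < e" using nat_approx_posE by blast
    have "norm (T (G m n)) < e" if "M \<le> m" for m n
    proof -
      have "1 / real (Suc m) \<le> 1 / Suc M" using that by (simp add: frac_le)
      thus ?thesis using T_G[of m n] \<open>1 / Suc M < e\<close> by linarith
    qed
    thus "\<exists>M. \<forall>m\<ge>M. \<forall>\<^sub>F n in sequentially. dist (norm (T (f (G m n)))) 0 < e"
      by (auto simp: f_G intro!: always_eventually)
  qed
  ultimately show False using assms unfolding strongly_DNS_def by blast
qed

theorem proposition5p6:
  fixes T :: "'a::banach_lattice \<Rightarrow> 'b::banach"
  assumes "bounded_linear T"
  shows "(DNS T \<longrightarrow> weakly_DNS T) \<and> (strongly_DNS T \<longrightarrow> strictly_DNS T)"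
  using DNS_imp_weakly_DNS[OF assms] strongly_DNS_imp_strictly_DNS by blast

end
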